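(* Let $(X,\mu)$ be a discrete-time BRW whose generating function satisfies $G(z|x)=\frac{1}{1+\sum_ym_{xy}(1-z(y))}$ for all $z\in[0,1]^X$, $x\in X$ (e.g. a BRW with independent diffusion and $\rho_x(n)=\frac{1}{1+\bar\rho_x}(\frac{\bar\rho_x}{1+\bar\rho_x})^n$). Then there is global survival starting from $x$ if and only if there exists $v\in[0,1]^X$ with $v(x)>0$ such that $Mv(y)\ge\frac{v(y)}{1-v(y)}$ for all $y\in X$; equivalently, if and only if there exists such $v$ with $Mv(y)=\frac{v(y)}{1-v(y)}$ for all $y$.
   Context: $S_X:=\{f:X\to\mathbb N:\sum_yf(y)<\infty\}$; a discrete-time BRW $(X,\mu)$: probability measures $\mu_x$ on $S_X$, each particle at $x$ independently replaced by $f(y)$ particles at each $y$, $f\sim\mu_x$. $m_{xy}:=\sum_ff(y)\mu_x(f)$ with $\sup_x\sum_ym_{xy}<\infty$, $Mv(y):=\sum_wm_{yw}v(w)$. $G(z|x):=\sum_f\mu_x(f)\prod_yz(y)^{f(y)}$. Convention: $a/0=+\infty$ for $a>0$. Global survival from $x$: with positive probability, starting from one particle at $x$, particles are present at every generation. *)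

theory Defs
  imports "HOL-Probability.Probability"
begin

text \<open>A discrete-time BRW on the vertex set 'x is given by
  mu :: 'x => 'x multiset pmf; the multiset f drawn from mu x is the offspring
  configuration of a particle at x (f = finitely supported map X -> N, count f y = f(y)).
  Configurations of the process are multisets of positions.\<close>

fun brw_step_list :: "('x \<Rightarrow> 'x multiset pmf) \<Rightarrow> 'x list \<Rightarrow> 'x multiset pmf" where
  "brw_step_list mu [] = return_pmf {#}"
| "brw_step_list mu (a # as) =
     bind_pmf (mu a) (\<lambda>f. map_pmf (\<lambda>g. f + g) (brw_step_list mu as))"

text \<open>One-generation transition kernel of the BRW (order of particles is irrelevant).\<close>
definition brw_step :: "('x \<Rightarrow> 'x multiset pmf) \<Rightarrow> 'x multiset \<Rightarrow> 'x multiset pmf" where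
  "brw_step mu eta = brw_step_list mu (SOME xs. mset xs = eta)"

fun brw_ext :: "('x \<Rightarrow> 'x multiset pmf) \<Rightarrow> nat \<Rightarrow> 'x multiset \<Rightarrow> real" where
  "brw_ext mu 0 eta = (if eta = {#} then 1 else 0)"
| "brw_ext mu (Suc n) eta = measure_pmf.expectation (brw_step mu eta) (brw_ext mu n)"

definition global_survival :: "('x \<Rightarrow> 'x multiset pmf) \<Rightarrow> 'x \<Rightarrow> bool" where
  "global_survival mu x \<longleftrightarrow> (SUP n. brw_ext mu n {#x#}) < 1"

definition brw_m :: "('x \<Rightarrow> 'x multiset pmf) \<Rightarrow> 'x \<Rightarrow> 'x \<Rightarrow> ennreal" where
  "brw_m mu x y = (\<integral>\<^sup>+ f. ennreal (real (count f y)) \<partial>measure_pmf (mu x))"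

definition brw_M :: "('x \<Rightarrow> 'x multiset pmf) \<Rightarrow> ('x \<Rightarrow> real) \<Rightarrow> 'x \<Rightarrow> ennreal" where
  "brw_M mu v y = (\<integral>\<^sup>+ w. brw_m mu y w * ennreal (v w) \<partial>count_space UNIV)"

definition brw_G :: "('x \<Rightarrow> 'x multiset pmf) \<Rightarrow> ('x \<Rightarrow> real) \<Rightarrow> 'x \<Rightarrow> real" where
  "brw_G mu z x = measure_pmf.expectation (mu x) (\<lambda>f. \<Prod>y\<in>set_mset f. z y ^ count f y)"

definition odds :: "real \<Rightarrow> ennreal" where
  "odds a = (if a = 1 then \<infinity> else ennreal (a / (1 - a)))"

end

theory Submission
  imports Defs
begin

(*
  Let q_n(w) be the probability that the BRW started from one particle
  at w is extinct at generation n, and q(w) = sup_n q_n(w) its extinction probability.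
  By the branching property the extinction probability of a configuration is the
  product of those of its particles, hence q_(n+1) = G(q_n | .).  Since G(. | w) is
  monotone, q_n increases to q, q is a fixed point of G (dominated convergence), and
  q <= z for every z in [0,1]^X with G(z) <= z.  So there is global survival from x
  iff some z in [0,1]^X with z(x) < 1 satisfies G(z) <= z, iff some such z satisfies
  G(z) = z.  Under the hypothesis G(z|w) = 1/(1 + sum_y m_wy (1 - z(y))), substituting
  z = 1 - v turns G(z) <= z into Mv >= v/(1-v) and G(z) = z into Mv = v/(1-v).
*)

abbreviation prob_vector :: "('x \<Rightarrow> real) \<Rightarrow> bool" where
  "prob_vector z \<equiv> \<forall>y. 0 \<le> z y \<and> z y \<le> 1"

definition conf_prod :: "('x \<Rightarrow> real) \<Rightarrow> 'x multiset \<Rightarrow> real" where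
  "conf_prod z f = prod_mset (image_mset z f)"

lemma conf_prod_empty [simp]: "conf_prod z {#} = 1"
  by (simp add: conf_prod_def)

lemma conf_prod_single [simp]: "conf_prod z {#w#} = z w"
  by (simp add: conf_prod_def)

lemma conf_prod_add: "conf_prod z (f + g) = conf_prod z f * conf_prod z g"
  by (simp add: conf_prod_def)

lemma conf_prod_nonneg: "(\<And>y. 0 \<le> z y) \<Longrightarrow> 0 \<le> conf_prod z f"
  unfolding conf_prod_def by (induction f) simp_all

lemma conf_prod_bounds:
  assumes "prob_vector z"
  shows "0 \<le> conf_prod z f \<and> conf_prod z f \<le> 1"
proof (induction f)
  case (add a f)
  then show ?case using assms
    by (simp add: conf_prod_def) (metis mult_le_one)
qed simp

lemma conf_prod_mono:
  assumes "prob_vector z" and "\<forall>y. z y \<le> z' y"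
  shows "conf_prod z f \<le> conf_prod z' f"
proof (induction f)
  case (add a f)
  have "z a * conf_prod z f \<le> z' a * conf_prod z' f"
    using add assms conf_prod_bounds[OF assms(1), of f] by (intro mult_mono) (auto intro: order_trans)
  then show ?case by (simp add: conf_prod_def)
qed simp

lemma ennreal_conf_prod:
  assumes "\<And>y. 0 \<le> z y"
  shows "ennreal (conf_prod z f) = prod_mset (image_mset (\<lambda>y. ennreal (z y)) f)"
  unfolding conf_prod_def
  by (induction f) (simp_all add: assms ennreal_mult conf_prod_nonneg[OF assms, unfolded conf_prod_def])

text \<open>Expectations of [0,1]-valued functions lie in [0,1] and agree with the
  nonnegative integral; this lets us compute with the product-friendly ennreal integral.\<close>
lemma expectation_unit_bounds:
  fixes p :: "'a pmf" and h :: "'a \<Rightarrow> real"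
  assumes "\<And>a. 0 \<le> h a \<and> h a \<le> 1"
  shows "0 \<le> measure_pmf.expectation p h \<and> measure_pmf.expectation p h \<le> 1"
proof -
  have "integrable (measure_pmf p) h"
    by (rule measure_pmf.integrable_const_bound[where B=1]) (use assms in auto)
  moreover have "measure_pmf.expectation p h \<le> measure_pmf.expectation p (\<lambda>_. 1)"
    by (rule integral_mono) (use assms calculation in auto)
  ultimately show ?thesis using assms by (simp add: integral_nonneg)
qed

lemma expectation_unit_nn_integral:
  fixes p :: "'a pmf" and h :: "'a \<Rightarrow> real"
  assumes "\<And>a. 0 \<le> h a \<and> h a \<le> 1"
  shows "ennreal (measure_pmf.expectation p h) = (\<integral>\<^sup>+ a. ennreal (h a) \<partial>p)"
proof -
  have "integrable (measure_pmf p) h"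
    by (rule measure_pmf.integrable_const_bound[where B=1]) (use assms in auto)
  then show ?thesis using assms by (simp add: nn_integral_eq_integral)
qed

lemma brw_G_conf_prod: "brw_G mu z w = measure_pmf.expectation (mu w) (conf_prod z)"
  unfolding brw_G_def conf_prod_def by (simp add: image_prod_mset_multiplicity)

lemma brw_G_bounds: "prob_vector z \<Longrightarrow> 0 \<le> brw_G mu z w \<and> brw_G mu z w \<le> 1"
  unfolding brw_G_conf_prod by (rule expectation_unit_bounds) (use conf_prod_bounds in blast)

lemma brw_G_mono:
  assumes "prob_vector z" "prob_vector z'" "\<forall>y. z y \<le> z' y"
  shows "brw_G mu z w \<le> brw_G mu z' w"
  unfolding brw_G_conf_prod
proof (rule integral_mono)
  show "integrable (measure_pmf (mu w)) (conf_prod z)"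
       "integrable (measure_pmf (mu w)) (conf_prod z')"
    using conf_prod_bounds[OF assms(1)] conf_prod_bounds[OF assms(2)]
    by (auto intro!: measure_pmf.integrable_const_bound[where B=1])
qed (use conf_prod_mono assms in blast)

lemma nn_integral_step_list_conf_prod:
  assumes "prob_vector z"
  shows "(\<integral>\<^sup>+ g. ennreal (conf_prod z g) \<partial>brw_step_list mu xs) =
     prod_list (map (\<lambda>a. \<integral>\<^sup>+ f. ennreal (conf_prod z f) \<partial>mu a) xs)"
proof (induction xs)
  case (Cons a xs)
  have "(\<integral>\<^sup>+ g. ennreal (conf_prod z g) \<partial>brw_step_list mu (a # xs)) =
     (\<integral>\<^sup>+ f. \<integral>\<^sup>+ g. ennreal (conf_prod z f) * ennreal (conf_prod z g) \<partial>brw_step_list mu xs \<partial>mu a)"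
    using conf_prod_bounds[OF assms] by (simp add: conf_prod_add ennreal_mult)
  also have "\<dots> = (\<integral>\<^sup>+ f. ennreal (conf_prod z f) \<partial>mu a) *
                  (\<integral>\<^sup>+ g. ennreal (conf_prod z g) \<partial>brw_step_list mu xs)"
    by (simp add: nn_integral_cmult nn_integral_multc)
  finally show ?case using Cons by simp
qed simp

lemma expectation_step_conf_prod:
  assumes z: "prob_vector z"
  shows "measure_pmf.expectation (brw_step mu eta) (conf_prod z) = conf_prod (\<lambda>a. brw_G mu z a) eta"
proof -
  define xs where "xs = (SOME xs. mset xs = eta)"
  have xs: "mset xs = eta" unfolding xs_def by (rule someI_ex[OF ex_mset])
  have step: "brw_step mu eta = brw_step_list mu xs" by (simp add: brw_step_def xs_def)
  have G_nn: "0 \<le> brw_G mu z a" for a using brw_G_bounds[OF z] by blast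
  have "ennreal (measure_pmf.expectation (brw_step mu eta) (conf_prod z))
      = (\<integral>\<^sup>+ g. ennreal (conf_prod z g) \<partial>brw_step_list mu xs)"
    unfolding step by (rule expectation_unit_nn_integral) (use conf_prod_bounds[OF z] in blast)
  also have "\<dots> = prod_list (map (\<lambda>a. \<integral>\<^sup>+ f. ennreal (conf_prod z f) \<partial>mu a) xs)"
    by (rule nn_integral_step_list_conf_prod[OF z])
  also have "\<dots> = prod_list (map (\<lambda>a. ennreal (brw_G mu z a)) xs)"
    unfolding brw_G_conf_prod using expectation_unit_nn_integral conf_prod_bounds[OF z] by metis
  also have "\<dots> = ennreal (conf_prod (\<lambda>a. brw_G mu z a) eta)"
    by (simp add: ennreal_conf_prod G_nn flip: xs prod_mset_prod_list)
  finally show ?thesis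
    using expectation_unit_bounds conf_prod_bounds[OF z] conf_prod_nonneg G_nn
    by (metis ennreal_inj)
qed

lemma brw_ext_Suc_of_conf_prod:
  assumes q: "prob_vector q" and ext_n: "brw_ext mu n = conf_prod q"
  shows "brw_ext mu (Suc n) = conf_prod (brw_G mu q)"
proof
  fix eta
  have "brw_ext mu (Suc n) eta = measure_pmf.expectation (brw_step mu eta) (brw_ext mu n)"
    by simp
  also have "\<dots> = measure_pmf.expectation (brw_step mu eta) (conf_prod q)"
    using ext_n by (rule arg_cong)
  also have "\<dots> = conf_prod (brw_G mu q) eta"
    by (rule expectation_step_conf_prod[OF q])
  finally show "brw_ext mu (Suc n) eta = conf_prod (brw_G mu q) eta" .
qed

lemma brw_ext_conf_prod:
  "brw_ext mu n = conf_prod (\<lambda>w. brw_ext mu n {#w#}) \<and> prob_vector (\<lambda>w. brw_ext mu n {#w#})"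
proof (induction n)
  case 0
  have "brw_ext mu 0 eta = conf_prod (\<lambda>w. brw_ext mu 0 {#w#}) eta" for eta
    by (cases eta) (simp_all add: conf_prod_def)
  then show ?case by auto
next
  case (Suc n)
  then have q: "prob_vector (\<lambda>w. brw_ext mu n {#w#})"
    and ext_n: "brw_ext mu n = conf_prod (\<lambda>w. brw_ext mu n {#w#})" by blast+
  have ext_Suc: "brw_ext mu (Suc n) = conf_prod (brw_G mu (\<lambda>w. brw_ext mu n {#w#}))"
    by (rule brw_ext_Suc_of_conf_prod[OF q ext_n])
  show ?case unfolding ext_Suc conf_prod_single using brw_G_bounds[OF q] by blast
qed

lemma brw_ext_bounds: "0 \<le> brw_ext mu n {#w#} \<and> brw_ext mu n {#w#} \<le> 1"
  using brw_ext_conf_prod[of mu n] by blast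

lemma brw_ext_Suc_single: "brw_ext mu (Suc n) {#w#} = brw_G mu (\<lambda>w. brw_ext mu n {#w#}) w"
proof -
  have "brw_ext mu (Suc n) = conf_prod (brw_G mu (\<lambda>w. brw_ext mu n {#w#}))"
    using brw_ext_conf_prod[of mu n] by (blast intro: brw_ext_Suc_of_conf_prod)
  then show ?thesis by (simp only: conf_prod_single)
qed

lemma brw_ext_incseq: "incseq (\<lambda>n. brw_ext mu n {#w#})"
proof -
  have "\<forall>w. brw_ext mu n {#w#} \<le> brw_ext mu (Suc n) {#w#}" for n
  proof (induction n)
    case 0 then show ?case using brw_ext_bounds[of mu "Suc 0"] by (simp del: brw_ext.simps(2))
  next
    case (Suc n)
    then show ?case
      using brw_ext_bounds[of mu n] brw_ext_bounds[of mu "Suc n"]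
      by (simp only: brw_ext_Suc_single[of mu "Suc n"] brw_ext_Suc_single[of mu n])
         (blast intro: brw_G_mono)
  qed
  then show ?thesis by (intro incseq_SucI) blast
qed

definition ext_prob :: "('x \<Rightarrow> 'x multiset pmf) \<Rightarrow> 'x \<Rightarrow> real" where
  "ext_prob mu w = (SUP n. brw_ext mu n {#w#})"

lemma global_survival_iff_ext_prob: "global_survival mu x \<longleftrightarrow> ext_prob mu x < 1"
  by (simp add: global_survival_def ext_prob_def)

lemma brw_ext_bdd_above: "bdd_above (range (\<lambda>n. brw_ext mu n {#w#}))"
  using brw_ext_bounds[of mu _ w] by (intro bdd_aboveI[where M=1]) auto

lemma brw_ext_tendsto_ext_prob: "(\<lambda>n. brw_ext mu n {#w#}) \<longlonglongrightarrow> ext_prob mu w"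
  unfolding ext_prob_def by (rule LIMSEQ_incseq_SUP[OF brw_ext_bdd_above brw_ext_incseq])

lemma ext_prob_bounds: "prob_vector (ext_prob mu)"
proof
  fix y
  have "0 \<le> brw_ext mu 0 {#y#}" by simp
  also have "\<dots> \<le> ext_prob mu y"
    unfolding ext_prob_def by (rule cSUP_upper[OF _ brw_ext_bdd_above]) auto
  finally show "0 \<le> ext_prob mu y \<and> ext_prob mu y \<le> 1"
    using brw_ext_bounds[of mu _ y] by (auto simp: ext_prob_def intro!: cSUP_least)
qed

text \<open>q lies below every supersolution G(z) <= z in [0,1]^X, since by induction
  and monotonicity of G every q_n does.\<close>
lemma ext_prob_le_supersolution:
  assumes z: "prob_vector z" and super: "\<forall>y. brw_G mu z y \<le> z y"
  shows "ext_prob mu w \<le> z w"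
proof -
  have "\<forall>y. brw_ext mu n {#y#} \<le> z y" for n
  proof (induction n)
    case 0 then show ?case using z by simp
  next
    case (Suc n)
    then show ?case
      using z super brw_ext_bounds[of mu n]
      by (simp only: brw_ext_Suc_single) (blast intro: brw_G_mono order_trans)
  qed
  then show ?thesis unfolding ext_prob_def by (intro cSUP_least) auto
qed

text \<open>q is a fixed point of G: pass to the limit in q_(n+1) = G(q_n) by dominated
  convergence, the integrands being bounded by 1.\<close>
lemma ext_prob_fixed_point: "brw_G mu (ext_prob mu) w = ext_prob mu w"
proof -
  have "(\<lambda>n. measure_pmf.expectation (mu w) (conf_prod (\<lambda>w. brw_ext mu n {#w#})))
      \<longlonglongrightarrow> measure_pmf.expectation (mu w) (conf_prod (ext_prob mu))"
  proof (rule integral_dominated_convergence[where w="\<lambda>_. 1"])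
    show "AE f in measure_pmf (mu w). (\<lambda>n. conf_prod (\<lambda>w. brw_ext mu n {#w#}) f)
            \<longlonglongrightarrow> conf_prod (ext_prob mu) f"
      unfolding conf_prod_def image_prod_mset_multiplicity
      by (intro AE_I2 tendsto_prod tendsto_power brw_ext_tendsto_ext_prob)
    show "AE f in measure_pmf (mu w). norm (conf_prod (\<lambda>w. brw_ext mu n {#w#}) f) \<le> 1" for n
      using conf_prod_bounds[of "\<lambda>w. brw_ext mu n {#w#}"] brw_ext_bounds[of mu n]
      by (intro AE_I2) auto
  qed auto
  then have "(\<lambda>n. brw_ext mu (Suc n) {#w#}) \<longlonglongrightarrow> brw_G mu (ext_prob mu) w"
    by (simp only: brw_ext_Suc_single brw_G_conf_prod)
  moreover have "(\<lambda>n. brw_ext mu (Suc n) {#w#}) \<longlonglongrightarrow> ext_prob mu w"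
    by (rule LIMSEQ_Suc[OF brw_ext_tendsto_ext_prob])
  ultimately show ?thesis by (rule LIMSEQ_unique)
qed

lemma global_survival_of_supersolution:
  assumes "prob_vector z" "\<forall>y. brw_G mu z y \<le> z y" "z x < 1"
  shows "global_survival mu x"
  using ext_prob_le_supersolution[OF assms(1,2), of x] assms(3)
  by (simp add: global_survival_iff_ext_prob)

lemma fixed_point_of_global_survival:
  assumes "global_survival mu x"
  shows "\<exists>z. prob_vector z \<and> z x < 1 \<and> (\<forall>y. brw_G mu z y = z y)"
  using assms ext_prob_bounds[of mu] ext_prob_fixed_point[of mu]
  by (auto simp: global_survival_iff_ext_prob)

lemma inverse_le_of_odds_le:
  assumes "0 \<le> a" "a \<le> 1" "odds a \<le> M"
  shows "1 / (1 + M) \<le> ennreal (1 - a)"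
proof (cases "a = 1")
  case True
  then have "M = \<infinity>" using assms by (simp add: odds_def top_unique)
  then show ?thesis by simp
next
  case False
  then have a1: "a < 1" using assms by simp
  have "ennreal (1 / (1 - a)) = ennreal 1 + ennreal (a / (1 - a))"
    using a1 assms by (subst ennreal_plus[symmetric]) (auto simp: field_simps)
  also have "\<dots> \<le> 1 + M" using assms False by (simp add: odds_def add_left_mono)
  finally have "ennreal (1 / (1 - a)) \<le> 1 + M" .
  then have "1 \<le> (1 + M) * ennreal (1 - a)"
    using a1 mult_right_mono[of "ennreal (1 / (1 - a))" "1 + M" "ennreal (1 - a)"]
    by (simp add: ennreal_mult[symmetric] del: ennreal_mult)
  then show ?thesis
    by (intro divide_le_posI_ennreal) (auto simp: add_pos_nonneg)
qed

lemma odds_eq_of_inverse_eq: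
  assumes "0 \<le> b" "b \<le> 1" "ennreal b = 1 / (1 + M)"
  shows "M = odds (1 - b)"
proof (cases "b = 0")
  case True
  then have "1 + M = \<infinity>" using assms by (simp add: ennreal_divide_eq_0_iff)
  then show ?thesis using True by (simp add: odds_def)
next
  case False
  then obtain m where m: "M = ennreal m" "0 \<le> m" using assms by (cases M) auto
  have "1 + ennreal m = ennreal (1 + m)" using m by simp
  then have "1 / (1 + ennreal m) = ennreal (1 / (1 + m))"
    using m divide_ennreal[of 1 "1 + m"] by simp
  then have "b = 1 / (1 + m)" using m assms by (simp add: ennreal_inj)
  then have "m = (1 - b) / b" using m False by (simp add: field_simps)
  then show ?thesis using m False by (simp add: odds_def)
qed

context
  fixes mu :: "'x \<Rightarrow> 'x multiset pmf"
  assumes genfun: "\<And>z w. prob_vector z \<Longrightarrow>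
       ennreal (brw_G mu z w) = 1 / (1 + (\<integral>\<^sup>+ y. brw_m mu w y * ennreal (1 - z y) \<partial>count_space UNIV))"
begin

lemma brw_G_complement:
  assumes "prob_vector v"
  shows "ennreal (brw_G mu (\<lambda>y. 1 - v y) w) = 1 / (1 + brw_M mu v w)"
  using genfun[of "\<lambda>y. 1 - v y" w] assms by (simp add: brw_M_def)

lemma supersolution_of_odds_le:
  assumes v: "prob_vector v" and odds: "odds (v w) \<le> brw_M mu v w"
  shows "brw_G mu (\<lambda>y. 1 - v y) w \<le> 1 - v w"
proof -
  have "ennreal (brw_G mu (\<lambda>y. 1 - v y) w) \<le> ennreal (1 - v w)"
    unfolding brw_G_complement[OF v] using v odds by (intro inverse_le_of_odds_le) auto
  then show ?thesis using v by (simp add: ennreal_le_iff)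
qed

lemma odds_eq_of_fixed_point:
  assumes z: "prob_vector z" and fixed: "brw_G mu z w = z w"
  shows "brw_M mu (\<lambda>y. 1 - z y) w = odds (1 - z w)"
proof (rule odds_eq_of_inverse_eq)
  have "prob_vector (\<lambda>y. 1 - z y)" using z by simp
  from brw_G_complement[OF this, of w] show "ennreal (z w) = 1 / (1 + brw_M mu (\<lambda>y. 1 - z y) w)"
    using fixed by simp
qed (use z in auto)

end

theorem mainTheorem12:
  fixes mu :: "'x::countable \<Rightarrow> 'x multiset pmf" and x :: 'x
  assumes bounded: "\<exists>C::real. \<forall>w. (\<integral>\<^sup>+ y. brw_m mu w y \<partial>count_space UNIV) \<le> ennreal C"
    and genfun: "\<And>z w. (\<forall>y. 0 \<le> z y \<and> z y \<le> 1) \<Longrightarrow>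
       ennreal (brw_G mu z w) = 1 / (1 + (\<integral>\<^sup>+ y. brw_m mu w y * ennreal (1 - z y) \<partial>count_space UNIV))"
  shows "(global_survival mu x \<longleftrightarrow>
           (\<exists>v. (\<forall>y. 0 \<le> v y \<and> v y \<le> 1) \<and> v x > 0 \<and> (\<forall>y. brw_M mu v y \<ge> odds (v y))))
       \<and> (global_survival mu x \<longleftrightarrow>
           (\<exists>v. (\<forall>y. 0 \<le> v y \<and> v y \<le> 1) \<and> v x > 0 \<and> (\<forall>y. brw_M mu v y = odds (v y))))"
proof -
  have survival_eq: "\<exists>v. prob_vector v \<and> v x > 0 \<and> (\<forall>y. brw_M mu v y = odds (v y))"
    if surv: "global_survival mu x"
  proof -
    obtain z where "prob_vector z" "z x < 1" "\<forall>y. brw_G mu z y = z y"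
      using fixed_point_of_global_survival[OF surv] by blast
    then show ?thesis
      using odds_eq_of_fixed_point[OF genfun] by (intro exI[of _ "\<lambda>y. 1 - z y"]) auto
  qed
  have survival_ge: "global_survival mu x"
    if "prob_vector v" "v x > 0" "\<forall>y. brw_M mu v y \<ge> odds (v y)" for v
    using that supersolution_of_odds_le[OF genfun]
    by (intro global_survival_of_supersolution[of "\<lambda>y. 1 - v y"]) auto
  show ?thesis using survival_eq survival_ge by (metis order_refl)
qed

end
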